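(* Let $\Phi$ satisfy the Standing Assumption. Then for every $\lambda\in\mathbb R$ and $t\ge0$, $$\mathfrak e_\Phi(t;\lambda)=\sum_{k=0}^{+\infty}\lambda^ku_k^*(t).$$
   Context: Standing Assumption: $\Phi$ is a special Bernstein function (both $\Phi$ and $\lambda/\Phi(\lambda)$ are Bernstein functions) with Lévy–Khintchine triple $a_\Phi=b_\Phi=0$, $\nu_\Phi(0,\infty)=\infty$; the potential measure of the subordinator $\sigma_\Phi$ (with $\mathbb E e^{-\lambda\sigma_\Phi(t)}=e^{-t\Phi(\lambda)}$) has a non-increasing density $u_\Phi\ge0$, and $u_\Phi(t)\le Ct^{\beta-1}$ on $(0,t_0)$ for some $t_0,C>0,\beta\in(0,1)$. $U_\Phi(t)=\int_0^tu_\Phi(s)ds$. $L_\Phi(t)=\inf\{y>0:\sigma_\Phi(y)>t\}$ and $\mathfrak e_\Phi(t;\lambda)=\mathbb E[e^{\lambda L_\Phi(t)}]$. Define $u_0^*\equiv1$, $u_1^*=U_\Phi$, $u_{k+1}^*(t)=\int_0^tu_\Phi(t-s)u_k^*(s)ds$ for $k\ge1$. *)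

theory Defs
  imports "HOL-Probability.Probability"
begin

definition bernstein :: "(real \<Rightarrow> real) \<Rightarrow> bool" where
  "bernstein f \<longleftrightarrow>
     (\<forall>x>0. 0 \<le> f x) \<and>
     (\<forall>n. \<forall>x>0. ((deriv ^^ n) f) differentiable (at x)) \<and>
     (\<forall>n\<ge>1. \<forall>x>0. 0 \<le> (-1) ^ (n - 1) * (deriv ^^ n) f x)"

definition special_bernstein :: "(real \<Rightarrow> real) \<Rightarrow> bool" where
  "special_bernstein f \<longleftrightarrow> bernstein f \<and> bernstein (\<lambda>x. x / f x)"

text \<open>Levy-Khintchine triple (a, b, nu) = (0, 0, nu):
  Phi(l) = integral of (1 - exp(-l x)) against the Levy measure nu on (0,infinity).\<close>
definition LK_triple_zero :: "(real \<Rightarrow> real) \<Rightarrow> real measure \<Rightarrow> bool" where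
  "LK_triple_zero Phi nu \<longleftrightarrow>
     sets nu = sets borel \<and> emeasure nu {..0} = 0 \<and>
     (\<integral>\<^sup>+ x. ennreal (min 1 x) \<partial>nu) < \<infinity> \<and>
     (\<forall>l>0. ennreal (Phi l) = (\<integral>\<^sup>+ x. ennreal (1 - exp (- l * x)) \<partial>nu))"

definition subordinator :: "'a measure \<Rightarrow> (real \<Rightarrow> 'a \<Rightarrow> real) \<Rightarrow> (real \<Rightarrow> real) \<Rightarrow> bool" where
  "subordinator M sg Phi \<longleftrightarrow>
     prob_space M \<and>
     (\<forall>t\<ge>0. sg t \<in> borel_measurable M) \<and>
     (\<forall>\<omega>\<in>space M. sg 0 \<omega> = 0 \<and> mono_on {0..} (\<lambda>t. sg t \<omega>) \<and>
        (\<forall>t\<ge>0. continuous (at_right t) (\<lambda>s. sg s \<omega>))) \<and>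
     (\<forall>n (ts :: nat \<Rightarrow> real). 0 \<le> ts 0 \<and> (\<forall>i<n. ts i \<le> ts (Suc i)) \<longrightarrow>
        prob_space.indep_vars M (\<lambda>_. borel) (\<lambda>i \<omega>. sg (ts (Suc i)) \<omega> - sg (ts i) \<omega>) {..<n}) \<and>
     (\<forall>s\<ge>0. \<forall>t\<ge>0. distr M borel (\<lambda>\<omega>. sg (s + t) \<omega> - sg s \<omega>) = distr M borel (sg t)) \<and>
     (\<forall>l>0. \<forall>t\<ge>0. prob_space.expectation M (\<lambda>\<omega>. exp (- l * sg t \<omega>)) = exp (- t * Phi l))"

definition potential_density :: "'a measure \<Rightarrow> (real \<Rightarrow> 'a \<Rightarrow> real) \<Rightarrow> (real \<Rightarrow> real) \<Rightarrow> bool" where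
  "potential_density M sg u \<longleftrightarrow>
     (\<forall>A\<in>sets borel.
        (\<integral>\<^sup>+ t. indicator {0..} t * emeasure M {\<omega>\<in>space M. sg t \<omega> \<in> A} \<partial>lborel)
        = (\<integral>\<^sup>+ x. indicator (A \<inter> {0<..}) x * ennreal (u x) \<partial>lborel))"

definition inv_sub :: "(real \<Rightarrow> 'a \<Rightarrow> real) \<Rightarrow> real \<Rightarrow> 'a \<Rightarrow> real" where
  "inv_sub sg t \<omega> = Inf {y. 0 < y \<and> t < sg y \<omega>}"

definition Upot :: "(real \<Rightarrow> real) \<Rightarrow> real \<Rightarrow> real" where
  "Upot u t = (LINT s:{0..t}|lborel. u s)"

fun ustar :: "(real \<Rightarrow> real) \<Rightarrow> nat \<Rightarrow> real \<Rightarrow> real" where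
  "ustar u 0 t = 1"
| "ustar u (Suc 0) t = Upot u t"
| "ustar u (Suc (Suc k)) t = (LINT s:{0..t}|lborel. u (t - s) * ustar u (Suc k) s)"

end

theory Submission
  imports Defs
begin

text \<open>
  Up to a null set, \<open>s < L(t)\<close> implies \<open>\<sigma>(s) \<le> t\<close>, which implies \<open>s \<le> L(t)\<close>. By Tonelli,
  \<open>E[L(t)^(k+1)/(k+1)!] = G k t := \<integral>\<^sub>0\<^sup>\<infinity> s^k/k! P(\<sigma>(s) \<le> t) ds\<close>.
  Since \<open>s^(k+1)/(k+1)!\<close> is the convolution of \<open>s^k/k!\<close> with \<open>1\<close>, independence and
  stationarity of the increments of \<open>\<sigma>\<close> together with the potential density give
  \<open>G (k+1) = u * G k\<close> and \<open>G 0 = U\<close>, hence \<open>G k = u\<^sup>*\<^sub>k\<^sub>+\<^sub>1\<close>.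
  Running the same recursion against the weight \<open>e^(-\<theta>y)\<close> gives
  \<open>G k t \<le> e^(\<theta>t) Q(\<theta>)^(k+1)\<close> with \<open>Q(\<theta>) = \<integral>\<^sub>0\<^sup>t u(y) e^(-\<theta>y) dy\<close>, and \<open>Q(\<theta>) \<longrightarrow> 0\<close>
  as \<open>\<theta> \<longrightarrow> \<infinity>\<close>. So the moments of \<open>L(t)\<close> grow slower than any geometric sequence and the
  exponential series of \<open>e^(\<lambda>L(t))\<close> can be integrated term by term.
\<close>

section \<open>Integrals of powers and exponential moments\<close>

lemma has_integral_power_div_fact:
  fixes L :: real
  assumes "0 \<le> L"
  shows "((\<lambda>s. s ^ k / fact k) has_integral L ^ Suc k / fact (Suc k)) {0..L}"
proof -
  have "((\<lambda>s. s ^ Suc k / fact (Suc k)) has_real_derivative x ^ k / fact k) (at x within {0..L})"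
    for x :: real
  proof -
    have "((\<lambda>s. s ^ Suc k) has_real_derivative real (Suc k) * x ^ k) (at x)"
      using DERIV_pow[of "Suc k" x] by simp
    then have "((\<lambda>s. s ^ Suc k / fact (Suc k)) has_real_derivative real (Suc k) * x ^ k / fact (Suc k)) (at x)"
      by (rule DERIV_cdivide)
    moreover have "real (Suc k) * x ^ k / fact (Suc k) = x ^ k / fact k"
      unfolding fact_Suc[of k] by (subst mult_divide_mult_cancel_left) auto
    ultimately show ?thesis
      by (metis has_field_derivative_at_within)
  qed
  then have "((\<lambda>s. s ^ k / fact k) has_integral L ^ Suc k / fact (Suc k) - 0 ^ Suc k / fact (Suc k)) {0..L}"
    by (intro fundamental_theorem_of_calculus[OF assms])
       (simp add: has_real_derivative_iff_has_vector_derivative[symmetric])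
  then show ?thesis
    by simp
qed

lemma nn_integral_power_div_fact_Icc:
  fixes L :: real
  assumes "0 \<le> L"
  shows "(\<integral>\<^sup>+ s. ennreal (s ^ k / fact k) * indicator {0..L} s \<partial>lborel) = ennreal (L ^ Suc k / fact (Suc k))"
  by (rule nn_integral_has_integral_lebesgue'[OF _ has_integral_power_div_fact[OF assms]]) auto

lemma nn_integral_power_div_fact_Ico:
  fixes L :: real
  assumes "0 \<le> L"
  shows "(\<integral>\<^sup>+ s. ennreal (s ^ k / fact k) * indicator {0..<L} s \<partial>lborel) = ennreal (L ^ Suc k / fact (Suc k))"
proof -
  have "AE s in lborel. indicator {0..<L} s = (indicator {0..L} s :: ennreal)"
    using AE_lborel_singleton[of L] by eventually_elim (auto simp: indicator_def)
  then show ?thesis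
    by (subst nn_integral_power_div_fact_Icc[OF assms, symmetric]) (auto intro: nn_integral_cong_AE)
qed

lemma nn_integral_shift_atLeast:
  fixes h :: "real \<Rightarrow> ennreal"
  assumes "h \<in> borel_measurable borel"
  shows "(\<integral>\<^sup>+ b. indicator {0..} b * h (a + b) \<partial>lborel) = (\<integral>\<^sup>+ s. indicator {a..} s * h s \<partial>lborel)"
proof -
  have "(\<integral>\<^sup>+ s. indicator {a..} s * h s \<partial>lborel)
      = (\<integral>\<^sup>+ b. indicator {a..} (a + 1 * b) * h (a + 1 * b) \<partial>lborel)"
    using assms nn_integral_real_affine[of "\<lambda>s. indicator {a..} s * h s" 1 a] by simp
  also have "\<dots> = (\<integral>\<^sup>+ b. indicator {0..} b * h (a + b) \<partial>lborel)"
    by (intro nn_integral_cong) (auto simp: indicator_def)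
  finally show ?thesis
    by simp
qed

lemma nn_integral_convolution_commute:
  fixes f g :: "real \<Rightarrow> ennreal"
  assumes [measurable]: "f \<in> borel_measurable borel" "g \<in> borel_measurable borel"
  shows "(\<integral>\<^sup>+ y. f y * g (x - y) \<partial>lborel) = (\<integral>\<^sup>+ s. f (x - s) * g s \<partial>lborel)"
proof -
  have "(\<lambda>y. f y * g (x - y)) \<in> borel_measurable borel"
    by measurable
  from nn_integral_real_affine[OF this, of "-1" x] show ?thesis
    by simp
qed

lemma nn_integral_power_div_fact_Suc_convolution:
  fixes h :: "real \<Rightarrow> ennreal"
  assumes [measurable]: "h \<in> borel_measurable borel"
  shows "(\<integral>\<^sup>+ s. ennreal (s ^ Suc k / fact (Suc k)) * indicator {0..} s * h s \<partial>lborel) =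
    (\<integral>\<^sup>+ b. indicator {0..} b * (\<integral>\<^sup>+ a. ennreal (a ^ k / fact k) * indicator {0..} a * h (a + b) \<partial>lborel) \<partial>lborel)"
proof -
  have P: "pair_sigma_finite lborel lborel" ..
  let ?w = "\<lambda>a::real. ennreal (a ^ k / fact k) * indicator {0..} a"
  have [measurable]: "(\<lambda>p::real \<times> real. indicator {fst p..} (snd p) :: ennreal) \<in> borel_measurable (lborel \<Otimes>\<^sub>M lborel)"
    unfolding indicator_def atLeast_iff by measurable
  have "(\<integral>\<^sup>+ b. indicator {0..} b * (\<integral>\<^sup>+ a. ?w a * h (a + b) \<partial>lborel) \<partial>lborel)
      = (\<integral>\<^sup>+ b. (\<integral>\<^sup>+ a. indicator {0..} b * (?w a * h (a + b)) \<partial>lborel) \<partial>lborel)"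
    by (intro nn_integral_cong nn_integral_cmult[symmetric]) measurable
  also have "\<dots> = (\<integral>\<^sup>+ a. (\<integral>\<^sup>+ b. indicator {0..} b * (?w a * h (a + b)) \<partial>lborel) \<partial>lborel)"
    by (rule pair_sigma_finite.Fubini'[OF P]) measurable
  also have "\<dots> = (\<integral>\<^sup>+ a. ?w a * (\<integral>\<^sup>+ b. indicator {0..} b * h (a + b) \<partial>lborel) \<partial>lborel)"
    by (intro nn_integral_cong, subst nn_integral_cmult[symmetric])
       (auto intro!: nn_integral_cong simp: ac_simps)
  also have "\<dots> = (\<integral>\<^sup>+ a. ?w a * (\<integral>\<^sup>+ s. indicator {a..} s * h s \<partial>lborel) \<partial>lborel)"
    by (simp add: nn_integral_shift_atLeast)
  also have "\<dots> = (\<integral>\<^sup>+ a. (\<integral>\<^sup>+ s. ?w a * (indicator {a..} s * h s) \<partial>lborel) \<partial>lborel)"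
    by (intro nn_integral_cong nn_integral_cmult[symmetric]) measurable
  also have "\<dots> = (\<integral>\<^sup>+ s. (\<integral>\<^sup>+ a. ?w a * (indicator {a..} s * h s) \<partial>lborel) \<partial>lborel)"
    by (rule pair_sigma_finite.Fubini'[OF P, symmetric]) measurable
  also have "\<dots> = (\<integral>\<^sup>+ s. (\<integral>\<^sup>+ a. ennreal (a ^ k / fact k) * indicator {0..s} a \<partial>lborel) * (indicator {0..} s * h s) \<partial>lborel)"
  proof (intro nn_integral_cong)
    fix s :: real
    have "(\<integral>\<^sup>+ a. ?w a * (indicator {a..} s * h s) \<partial>lborel)
        = (\<integral>\<^sup>+ a. ennreal (a ^ k / fact k) * indicator {0..s} a * (indicator {0..} s * h s) \<partial>lborel)"
      by (intro nn_integral_cong) (auto simp: indicator_def)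
    also have "\<dots> = (\<integral>\<^sup>+ a. ennreal (a ^ k / fact k) * indicator {0..s} a \<partial>lborel) * (indicator {0..} s * h s)"
      by (rule nn_integral_multc) measurable
    finally show "(\<integral>\<^sup>+ a. ?w a * (indicator {a..} s * h s) \<partial>lborel)
        = (\<integral>\<^sup>+ a. ennreal (a ^ k / fact k) * indicator {0..s} a \<partial>lborel) * (indicator {0..} s * h s)" .
  qed
  also have "\<dots> = (\<integral>\<^sup>+ s. ennreal (s ^ Suc k / fact (Suc k)) * indicator {0..} s * h s \<partial>lborel)"
  proof (intro nn_integral_cong)
    fix s :: real
    show "(\<integral>\<^sup>+ a. ennreal (a ^ k / fact k) * indicator {0..s} a \<partial>lborel) * (indicator {0..} s * h s)
        = ennreal (s ^ Suc k / fact (Suc k)) * indicator {0..} s * h s"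
      by (cases "0 \<le> s") (simp_all add: nn_integral_power_div_fact_Icc)
  qed
  finally show ?thesis
    by simp
qed

lemma mult_indicator_atLeast_0_cong:
  fixes X Y :: ennreal
  shows "(0 \<le> b \<Longrightarrow> X = Y) \<Longrightarrow> indicator {0..} b * X = indicator {0..} b * Y"
  by (cases "0 \<le> b") simp_all

lemma nn_integral_eq_ennreal_integral:
  fixes f :: "'a \<Rightarrow> real"
  assumes "f \<in> borel_measurable M" and "AE x in M. 0 \<le> f x" and "(\<integral>\<^sup>+ x. ennreal (f x) \<partial>M) < \<infinity>"
  shows "(\<integral>\<^sup>+ x. ennreal (f x) \<partial>M) = ennreal (integral\<^sup>L M f) \<and> 0 \<le> integral\<^sup>L M f"
  using nn_integral_eq_integral[OF integrableI_nonneg[OF assms] assms(2)] integral_nonneg_AE[OF assms(2)]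
  by simp

lemma (in sigma_finite_measure) nn_integral_lborel_of_bool_swap:
  fixes w :: "real \<Rightarrow> ennreal"
  assumes [measurable]: "w \<in> borel_measurable borel" "Measurable.pred (lborel \<Otimes>\<^sub>M M) (\<lambda>(s, x). P s x)"
  shows "(\<integral>\<^sup>+ x. (\<integral>\<^sup>+ s. w s * of_bool (P s x) \<partial>lborel) \<partial>M)
           = (\<integral>\<^sup>+ s. w s * emeasure M {x \<in> space M. P s x} \<partial>lborel)"
proof -
  interpret L: pair_sigma_finite lborel M ..
  have "(\<integral>\<^sup>+ x. (\<integral>\<^sup>+ s. w s * of_bool (P s x) \<partial>lborel) \<partial>M)
      = (\<integral>\<^sup>+ s. (\<integral>\<^sup>+ x. w s * of_bool (P s x) \<partial>M) \<partial>lborel)"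
    by (rule L.Fubini') measurable
  also have "\<dots> = (\<integral>\<^sup>+ s. w s * emeasure M {x \<in> space M. P s x} \<partial>lborel)"
  proof (intro nn_integral_cong)
    fix s
    have [measurable]: "Measurable.pred M (P s)"
      using measurable_Pair2[OF assms(2), of s] by simp
    have "(\<integral>\<^sup>+ x. w s * of_bool (P s x) \<partial>M) = w s * (\<integral>\<^sup>+ x. indicator {x \<in> space M. P s x} x \<partial>M)"
      by (subst nn_integral_cmult[symmetric]) (auto intro!: nn_integral_cong simp: indicator_def)
    then show "(\<integral>\<^sup>+ x. w s * of_bool (P s x) \<partial>M) = w s * emeasure M {x \<in> space M. P s x}"
      by simp
  qed
  finally show ?thesis .
qed

lemma (in prob_space) nn_integral_power_div_fact_layers:
  fixes X :: "'a \<Rightarrow> real"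
  assumes [measurable]: "X \<in> borel_measurable M" and nonneg: "AE \<omega> in M. 0 \<le> X \<omega>"
  shows "(\<integral>\<^sup>+ \<omega>. ennreal (X \<omega> ^ Suc k / fact (Suc k)) \<partial>M)
           = (\<integral>\<^sup>+ s. ennreal (s ^ k / fact k) * emeasure M {\<omega> \<in> space M. 0 \<le> s \<and> s < X \<omega>} \<partial>lborel)"
    and "(\<integral>\<^sup>+ \<omega>. ennreal (X \<omega> ^ Suc k / fact (Suc k)) \<partial>M)
           = (\<integral>\<^sup>+ s. ennreal (s ^ k / fact k) * emeasure M {\<omega> \<in> space M. 0 \<le> s \<and> s \<le> X \<omega>} \<partial>lborel)"
proof -
  have "(\<integral>\<^sup>+ \<omega>. ennreal (X \<omega> ^ Suc k / fact (Suc k)) \<partial>M)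
      = (\<integral>\<^sup>+ \<omega>. (\<integral>\<^sup>+ s. ennreal (s ^ k / fact k) * of_bool (0 \<le> s \<and> s < X \<omega>) \<partial>lborel) \<partial>M)"
    using nonneg
    by (intro nn_integral_cong_AE, elim eventually_mono,
        subst nn_integral_power_div_fact_Ico[symmetric]) (auto simp: indicator_def)
  also have "\<dots> = (\<integral>\<^sup>+ s. ennreal (s ^ k / fact k) * emeasure M {\<omega> \<in> space M. 0 \<le> s \<and> s < X \<omega>} \<partial>lborel)"
    by (rule nn_integral_lborel_of_bool_swap) measurable
  finally show "(\<integral>\<^sup>+ \<omega>. ennreal (X \<omega> ^ Suc k / fact (Suc k)) \<partial>M)
           = (\<integral>\<^sup>+ s. ennreal (s ^ k / fact k) * emeasure M {\<omega> \<in> space M. 0 \<le> s \<and> s < X \<omega>} \<partial>lborel)" .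
  have "(\<integral>\<^sup>+ \<omega>. ennreal (X \<omega> ^ Suc k / fact (Suc k)) \<partial>M)
      = (\<integral>\<^sup>+ \<omega>. (\<integral>\<^sup>+ s. ennreal (s ^ k / fact k) * of_bool (0 \<le> s \<and> s \<le> X \<omega>) \<partial>lborel) \<partial>M)"
    using nonneg
    by (intro nn_integral_cong_AE, elim eventually_mono,
        subst nn_integral_power_div_fact_Icc[symmetric]) (auto simp: indicator_def)
  also have "\<dots> = (\<integral>\<^sup>+ s. ennreal (s ^ k / fact k) * emeasure M {\<omega> \<in> space M. 0 \<le> s \<and> s \<le> X \<omega>} \<partial>lborel)"
    by (rule nn_integral_lborel_of_bool_swap) measurable
  finally show "(\<integral>\<^sup>+ \<omega>. ennreal (X \<omega> ^ Suc k / fact (Suc k)) \<partial>M)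
           = (\<integral>\<^sup>+ s. ennreal (s ^ k / fact k) * emeasure M {\<omega> \<in> space M. 0 \<le> s \<and> s \<le> X \<omega>} \<partial>lborel)" .
qed

lemma (in prob_space) exp_moment_series:
  fixes X :: "'a \<Rightarrow> real"
  assumes [measurable]: "X \<in> borel_measurable M" and nonneg: "AE \<omega> in M. 0 \<le> X \<omega>"
    and moment: "\<And>k. integrable M (\<lambda>\<omega>. X \<omega> ^ k / fact k) \<and> expectation (\<lambda>\<omega>. X \<omega> ^ k / fact k) = m k"
    and summable: "summable (\<lambda>k. \<bar>l\<bar> ^ k * m k)"
  shows "integrable M (\<lambda>\<omega>. exp (l * X \<omega>)) \<and> (\<lambda>k. l ^ k * m k) sums expectation (\<lambda>\<omega>. exp (l * X \<omega>))"
proof -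
  define f where "f k \<omega> = l ^ k * (X \<omega> ^ k / fact k)" for k \<omega>
  have integrable_f: "integrable M (f k)" for k
    unfolding f_def by (rule integrable_mult_right) (use moment in blast)
  have "expectation (\<lambda>\<omega>. norm (f k \<omega>)) = \<bar>l\<bar> ^ k * m k" for k
  proof -
    have "AE \<omega> in M. norm (f k \<omega>) = \<bar>l\<bar> ^ k * (X \<omega> ^ k / fact k)"
      using nonneg by eventually_elim (simp add: f_def abs_mult power_abs)
    then have "expectation (\<lambda>\<omega>. norm (f k \<omega>)) = expectation (\<lambda>\<omega>. \<bar>l\<bar> ^ k * (X \<omega> ^ k / fact k))"
      by (intro integral_cong_AE) (use integrable_f in auto)
    also have "\<dots> = \<bar>l\<bar> ^ k * m k"
      by (simp only: integral_mult_right_zero moment[THEN conjunct2])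
    finally show ?thesis .
  qed
  then have "summable (\<lambda>k. expectation (\<lambda>\<omega>. norm (f k \<omega>)))"
    using summable by simp
  moreover have "summable (\<lambda>k. norm (f k \<omega>))" for \<omega>
    using sums_summable[OF exp_converges[of "\<bar>l * X \<omega>\<bar>"]]
    by (simp add: f_def abs_mult power_abs power_mult_distrib divide_inverse ac_simps)
  ultimately have "integrable M (\<lambda>\<omega>. \<Sum>k. f k \<omega>)"
    and "(\<lambda>k. expectation (f k)) sums expectation (\<lambda>\<omega>. \<Sum>k. f k \<omega>)"
    using integrable_f by (auto intro!: integrable_suminf sums_integral)
  moreover have "(\<lambda>\<omega>. \<Sum>k. f k \<omega>) = (\<lambda>\<omega>. exp (l * X \<omega>))"
    using exp_converges[of "l * X _"]
    by (simp add: fun_eq_iff sums_iff f_def power_mult_distrib divide_inverse ac_simps)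
  moreover have "expectation (f k) = l ^ k * m k" for k
    unfolding f_def by (simp only: integral_mult_right_zero moment[THEN conjunct2])
  ultimately show ?thesis
    by simp
qed

section \<open>Decreasing densities\<close>

lemma borel_measurable_indicator_times_antimono:
  fixes u :: "real \<Rightarrow> real"
  assumes "antimono_on {0<..} u"
  shows "(\<lambda>y. indicator {0<..} y * u y) \<in> borel_measurable borel"
proof -
  have "mono_on {0<..} (\<lambda>y. - u y)"
    using assms by (auto simp: monotone_on_def)
  then have "(\<lambda>y. - u y) \<in> borel_measurable (restrict_space borel {0<..})"
    by (rule borel_measurable_mono_on_fnc)
  then have "(\<lambda>y. indicator {0<..} y *\<^sub>R (- u y)) \<in> borel_measurable borel"
    by (subst (asm) borel_measurable_restrict_space_iff) auto
  then have "(\<lambda>y. - (indicator {0<..} y *\<^sub>R (- u y))) \<in> borel_measurable borel"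
    by measurable
  then show ?thesis
    by simp
qed

lemma nn_integral_Ioc_less_top_of_powr_bound:
  fixes u :: "real \<Rightarrow> real"
  assumes antimono: "antimono_on {0<..} u" and "0 < t0" and "0 \<le> C" and "0 < beta"
    and bound: "\<And>s. 0 < s \<Longrightarrow> s < t0 \<Longrightarrow> u s \<le> C * s powr (beta - 1)"
  shows "(\<integral>\<^sup>+ y. indicator {0<..x} y * ennreal (u y) \<partial>lborel) < \<infinity>"
proof -
  define a where "a = t0 / 2"
  have a: "0 < a" "a < t0"
    using \<open>0 < t0\<close> by (auto simp: a_def)
  have powr: "(\<integral>\<^sup>+ y. ennreal (y powr (beta - 1)) * indicator {0..a} y \<partial>lborel)
      = ennreal (a powr (beta - 1 + 1) / (beta - 1 + 1))"
    by (rule nn_integral_has_integral_lebesgue'[OF _ has_integral_powr_from_0]) (use a \<open>0 < beta\<close> in auto)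
  have "indicator {0<..x} y * ennreal (u y)
      \<le> ennreal C * (ennreal (y powr (beta - 1)) * indicator {0..a} y) + ennreal (u a) * indicator {a..x} y" for y
  proof (cases "0 < y \<and> y \<le> x")
    case True
    show ?thesis
    proof (cases "y \<le> a")
      case True
      then have "ennreal (u y) \<le> ennreal C * ennreal (y powr (beta - 1))"
        using bound[of y] a \<open>0 < y \<and> y \<le> x\<close> \<open>0 \<le> C\<close> by (simp add: ennreal_mult[symmetric] ennreal_leI)
      then show ?thesis
        using True \<open>0 < y \<and> y \<le> x\<close> by (auto simp: indicator_def intro: order_trans[OF _ add_increasing2])
    next
      case False
      then have "ennreal (u y) \<le> ennreal (u a)"
        using antimono a by (intro ennreal_leI) (auto simp: monotone_on_def)
      then show ?thesis
        using False \<open>0 < y \<and> y \<le> x\<close> by (auto simp: indicator_def intro: order_trans[OF _ add_increasing])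
    qed
  qed (auto simp: indicator_def)
  then have "(\<integral>\<^sup>+ y. indicator {0<..x} y * ennreal (u y) \<partial>lborel)
      \<le> (\<integral>\<^sup>+ y. ennreal C * (ennreal (y powr (beta - 1)) * indicator {0..a} y) + ennreal (u a) * indicator {a..x} y \<partial>lborel)"
    by (intro nn_integral_mono)
  also have "\<dots> = ennreal C * (\<integral>\<^sup>+ y. ennreal (y powr (beta - 1)) * indicator {0..a} y \<partial>lborel)
      + ennreal (u a) * (\<integral>\<^sup>+ y. indicator {a..x} y \<partial>lborel)"
    by (subst nn_integral_add) (auto simp: nn_integral_cmult)
  also have "\<dots> < \<infinity>"
    using powr by (auto simp: ennreal_mult_less_top ennreal_mult[symmetric] emeasure_lborel_Icc_eq)
  finally show ?thesis .
qed

lemma nn_integral_exp_decay_INF: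
  fixes g :: "real \<Rightarrow> real"
  assumes [measurable]: "g \<in> borel_measurable borel"
    and nonneg: "\<And>y. 0 \<le> g y" and vanish: "\<And>y. y \<le> 0 \<Longrightarrow> g y = 0"
    and finite: "(\<integral>\<^sup>+ y. ennreal (g y) \<partial>lborel) < \<infinity>"
  shows "(INF n::nat. \<integral>\<^sup>+ y. ennreal (g y) * ennreal (exp (- real n * y)) \<partial>lborel) = 0"
proof -
  define f where "f n y = ennreal (g y * exp (- y) ^ n)" for n :: nat and y
  have f_eq: "ennreal (g y) * ennreal (exp (- real n * y)) = f n y" for n y
    using nonneg by (simp add: f_def ennreal_mult[symmetric] exp_of_nat_mult[symmetric] mult.commute)
  have dec: "decseq (\<lambda>n. f n y)" for y
  proof (cases "0 < y")
    case True
    then show ?thesis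
      using nonneg[of y] by (auto simp: decseq_Suc_iff f_def intro!: ennreal_leI mult_left_mono)
  qed (simp add: f_def vanish decseq_def)
  moreover have "(\<lambda>n. f n y) \<longlonglongrightarrow> 0" for y
  proof (cases "0 < y")
    case True
    then have "(\<lambda>n. g y * exp (- y) ^ n) \<longlonglongrightarrow> g y * 0"
      by (intro tendsto_mult tendsto_const LIMSEQ_power_zero) auto
    then have "(\<lambda>n. ennreal (g y * exp (- y) ^ n)) \<longlonglongrightarrow> ennreal (g y * 0)"
      by (rule tendsto_ennrealI)
    then show ?thesis
      by (simp add: f_def)
  qed (simp add: f_def vanish)
  ultimately have "(INF n. f n y) = 0" for y
    using LIMSEQ_INF LIMSEQ_unique by blast
  moreover have "(\<integral>\<^sup>+ y. (INF n. f n y) \<partial>lborel) = (INF n. integral\<^sup>N lborel (f n))"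
  proof (rule nn_integral_monotone_convergence_INF_AE')
    show "AE y in lborel. f (Suc n) y \<le> f n y" for n
      using dec by (simp add: decseq_Suc_iff)
    show "f n \<in> borel_measurable lborel" for n
      unfolding f_def by measurable
    show "(\<integral>\<^sup>+ y. f 0 y \<partial>lborel) < \<infinity>"
      using finite by (simp add: f_def)
  qed
  ultimately show ?thesis
    by (simp only: f_eq) simp
qed

section \<open>Subordinators and their first passage times\<close>

locale subordinator_process =
  fixes M :: "'a measure" and sg :: "real \<Rightarrow> 'a \<Rightarrow> real" and Phi :: "real \<Rightarrow> real"
  assumes subordinator: "subordinator M sg Phi"
begin

sublocale prob_space M
  using subordinator by (simp add: subordinator_def)

lemma borel_measurable_sg: "0 \<le> t \<Longrightarrow> sg t \<in> borel_measurable M"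
  using subordinator by (simp add: subordinator_def)

lemma sg_zero: "\<omega> \<in> space M \<Longrightarrow> sg 0 \<omega> = 0"
  using subordinator by (simp add: subordinator_def)

lemma sg_mono: "\<omega> \<in> space M \<Longrightarrow> 0 \<le> s \<Longrightarrow> s \<le> t \<Longrightarrow> sg s \<omega> \<le> sg t \<omega>"
  using subordinator by (auto simp: subordinator_def mono_on_def)

lemma sg_nonneg: "\<omega> \<in> space M \<Longrightarrow> 0 \<le> s \<Longrightarrow> 0 \<le> sg s \<omega>"
  using sg_mono[of \<omega> 0 s] sg_zero by auto

lemma borel_measurable_sg_max[measurable]: "sg (max 0 q) \<in> borel_measurable M"
  by (rule borel_measurable_sg) simp

lemma sg_less_iff_rat:
  assumes \<omega>: "\<omega> \<in> space M" and "0 \<le> s"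
  shows "sg s \<omega> < x \<longleftrightarrow> (\<exists>r::rat. s < real_of_rat r \<and> sg (max 0 (real_of_rat r)) \<omega> < x)"
proof
  assume "sg s \<omega> < x"
  moreover have "((\<lambda>y. sg y \<omega>) \<longlongrightarrow> sg s \<omega>) (at_right s)"
    using subordinator \<omega> \<open>0 \<le> s\<close> by (auto simp: subordinator_def continuous_within)
  ultimately have "eventually (\<lambda>y. sg y \<omega> < x) (at_right s)"
    using order_tendstoD(2) by blast
  then obtain b where "s < b" and b: "\<And>y. s < y \<Longrightarrow> y < b \<Longrightarrow> sg y \<omega> < x"
    unfolding eventually_at_right_field by auto
  obtain q where "q \<in> \<rat>" "s < q" "q < b"
    using Rats_dense_in_real[OF \<open>s < b\<close>] by auto
  moreover from \<open>q \<in> \<rat>\<close> obtain r where "q = real_of_rat r"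
    by (auto simp: Rats_def)
  ultimately show "\<exists>r::rat. s < real_of_rat r \<and> sg (max 0 (real_of_rat r)) \<omega> < x"
    using b[of q] \<open>0 \<le> s\<close> by (intro exI[of _ r]) auto
next
  assume "\<exists>r::rat. s < real_of_rat r \<and> sg (max 0 (real_of_rat r)) \<omega> < x"
  then obtain r :: rat where "s < real_of_rat r" "sg (max 0 (real_of_rat r)) \<omega> < x"
    by blast
  moreover have "sg s \<omega> \<le> sg (max 0 (real_of_rat r)) \<omega>"
    using sg_mono[OF \<omega> \<open>0 \<le> s\<close>] \<open>s < real_of_rat r\<close> by simp
  ultimately show "sg s \<omega> < x"
    by linarith
qed

text \<open>By right continuity \<open>\<sigma>\<close> is determined by its values at rational times, which makes
  it jointly measurable in time and path.\<close>

lemma measurable_sg_comp[measurable]: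
  assumes [measurable]: "a \<in> borel_measurable K" "b \<in> K \<rightarrow>\<^sub>M M"
  shows "(\<lambda>z. sg (max 0 (a z)) (b z)) \<in> borel_measurable K"
  unfolding borel_measurable_iff_less
proof
  fix x
  have "{z \<in> space K. sg (max 0 (a z)) (b z) < x} =
        {z \<in> space K. \<exists>r::rat. max 0 (a z) < real_of_rat r \<and> sg (max 0 (real_of_rat r)) (b z) < x}"
  proof (intro Collect_cong conj_cong refl)
    fix z assume "z \<in> space K"
    then have "b z \<in> space M"
      using measurable_space[OF assms(2)] by blast
    then show "sg (max 0 (a z)) (b z) < x \<longleftrightarrow>
        (\<exists>r::rat. max 0 (a z) < real_of_rat r \<and> sg (max 0 (real_of_rat r)) (b z) < x)"
      using sg_less_iff_rat[of "b z" "max 0 (a z)"] by simp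
  qed
  also have "\<dots> \<in> sets K"
    by measurable
  finally show "{z \<in> space K. sg (max 0 (a z)) (b z) < x} \<in> sets K" .
qed

definition never_exceeds :: "real \<Rightarrow> 'a set" where
  "never_exceeds t = {\<omega> \<in> space M. \<forall>s\<ge>0. sg s \<omega> \<le> t}"

lemma never_exceeds_rat:
  "never_exceeds t = {\<omega> \<in> space M. \<forall>r::rat. sg (max 0 (real_of_rat r)) \<omega> \<le> t}"
  unfolding never_exceeds_def
proof (intro Collect_cong conj_cong refl iffI allI impI)
  fix \<omega> and s :: real
  assume \<omega>: "\<omega> \<in> space M" and le: "\<forall>r::rat. sg (max 0 (real_of_rat r)) \<omega> \<le> t" and "0 \<le> s"
  obtain q where "q \<in> \<rat>" "s < q"
    using Rats_dense_in_real[of s "s + 1"] by auto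
  then obtain r where r: "s < real_of_rat r"
    by (auto simp: Rats_def)
  have "sg s \<omega> \<le> sg (max 0 (real_of_rat r)) \<omega>"
    using sg_mono[OF \<omega> \<open>0 \<le> s\<close>] r by simp
  then show "sg s \<omega> \<le> t"
    using le[rule_format, of r] by linarith
qed auto

lemma sets_never_exceeds[measurable]: "never_exceeds t \<in> sets M"
  unfolding never_exceeds_rat by measurable

lemma exceeds_of_not_never_exceeds:
  assumes "\<omega> \<in> space M" "\<omega> \<notin> never_exceeds t"
  shows "{y. 0 < y \<and> t < sg y \<omega>} \<noteq> {}"
proof -
  obtain s where "0 \<le> s" "t < sg s \<omega>"
    using assms by (auto simp: never_exceeds_def not_le)
  then have "s + 1 \<in> {y. 0 < y \<and> t < sg y \<omega>}"
    using sg_mono[OF assms(1), of s "s + 1"] by auto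
  then show ?thesis
    by blast
qed

lemma inv_sub_nonneg:
  assumes "\<omega> \<in> space M" "\<omega> \<notin> never_exceeds t"
  shows "0 \<le> inv_sub sg t \<omega>"
  unfolding inv_sub_def using exceeds_of_not_never_exceeds[OF assms] by (intro cInf_greatest) auto

lemma inv_sub_never_exceeds:
  assumes "\<omega> \<in> never_exceeds t"
  shows "inv_sub sg t \<omega> = Inf {}"
proof -
  have "sg y \<omega> \<le> t" if "0 < y" for y
    using assms that by (simp add: never_exceeds_def)
  then have empty: "{y. 0 < y \<and> t < sg y \<omega>} = {}"
    using leD by blast
  show ?thesis
    unfolding inv_sub_def empty by (rule refl)
qed

lemma sg_le_of_less_inv_sub:
  assumes \<omega>: "\<omega> \<in> space M" and "0 \<le> s" "0 \<le> t" and less: "s < inv_sub sg t \<omega>"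
  shows "sg s \<omega> \<le> t"
proof (rule ccontr)
  assume "\<not> sg s \<omega> \<le> t"
  then have "s \<in> {y. 0 < y \<and> t < sg y \<omega>}"
    using sg_zero[OF \<omega>] \<open>0 \<le> s\<close> \<open>0 \<le> t\<close> by (cases "s = 0") auto
  then have "inv_sub sg t \<omega> \<le> s"
    unfolding inv_sub_def by (intro cInf_lower bdd_belowI[of _ 0]) auto
  then show False
    using less by simp
qed

lemma le_inv_sub_of_sg_le:
  assumes \<omega>: "\<omega> \<in> space M" "\<omega> \<notin> never_exceeds t" and "0 \<le> s" and le: "sg s \<omega> \<le> t"
  shows "s \<le> inv_sub sg t \<omega>"
  unfolding inv_sub_def
proof (rule cInf_greatest[OF exceeds_of_not_never_exceeds[OF \<omega>]])
  fix y assume y: "y \<in> {y. 0 < y \<and> t < sg y \<omega>}"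
  show "s \<le> y"
  proof (rule ccontr)
    assume "\<not> s \<le> y"
    then have "sg y \<omega> \<le> sg s \<omega>"
      using sg_mono[OF \<omega>(1), of y s] y by auto
    then show False
      using y le by auto
  qed
qed

lemma inv_sub_less_iff_rat:
  assumes \<omega>: "\<omega> \<in> space M" "\<omega> \<notin> never_exceeds t"
  shows "inv_sub sg t \<omega> < y \<longleftrightarrow>
    (\<exists>r::rat. 0 < real_of_rat r \<and> real_of_rat r < y \<and> t < sg (max 0 (real_of_rat r)) \<omega>)"
proof
  assume "inv_sub sg t \<omega> < y"
  then obtain z where z: "0 < z" "t < sg z \<omega>" "z < y"
    using cInf_lessD[OF exceeds_of_not_never_exceeds[OF \<omega>]] unfolding inv_sub_def by blast
  obtain q where "q \<in> \<rat>" "z < q" "q < y"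
    using Rats_dense_in_real[OF \<open>z < y\<close>] by auto
  moreover from \<open>q \<in> \<rat>\<close> obtain r where r: "q = real_of_rat r"
    by (auto simp: Rats_def)
  moreover have "sg z \<omega> \<le> sg q \<omega>"
    using sg_mono[OF \<omega>(1), of z q] z \<open>z < q\<close> by auto
  moreover have "0 < q"
    using z \<open>z < q\<close> by linarith
  ultimately show "\<exists>r::rat. 0 < real_of_rat r \<and> real_of_rat r < y \<and> t < sg (max 0 (real_of_rat r)) \<omega>"
    using z by (intro exI[of _ r]) auto
next
  assume "\<exists>r::rat. 0 < real_of_rat r \<and> real_of_rat r < y \<and> t < sg (max 0 (real_of_rat r)) \<omega>"
  then obtain r :: rat where r: "0 < real_of_rat r" "real_of_rat r < y" "t < sg (real_of_rat r) \<omega>"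
    by auto
  then have "inv_sub sg t \<omega> \<le> real_of_rat r"
    unfolding inv_sub_def by (intro cInf_lower bdd_belowI[of _ 0]) auto
  then show "inv_sub sg t \<omega> < y"
    using r by simp
qed

lemma borel_measurable_inv_sub[measurable]: "inv_sub sg t \<in> borel_measurable M"
  unfolding borel_measurable_iff_less
proof
  fix y
  have "{\<omega> \<in> space M. inv_sub sg t \<omega> < y} =
     {\<omega> \<in> space M. (\<omega> \<in> never_exceeds t \<and> Inf {} < y) \<or>
        (\<exists>r::rat. 0 < real_of_rat r \<and> real_of_rat r < y \<and> t < sg (max 0 (real_of_rat r)) \<omega>)}"
  proof (intro Collect_cong conj_cong refl)
    fix \<omega> assume \<omega>: "\<omega> \<in> space M"
    show "inv_sub sg t \<omega> < y \<longleftrightarrow> (\<omega> \<in> never_exceeds t \<and> Inf {} < y) \<or>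
        (\<exists>r::rat. 0 < real_of_rat r \<and> real_of_rat r < y \<and> t < sg (max 0 (real_of_rat r)) \<omega>)"
    proof (cases "\<omega> \<in> never_exceeds t")
      case True
      then have "\<not> t < sg s \<omega>" if "0 < s" for s
        using that by (auto simp: never_exceeds_def not_less)
      then show ?thesis
        using inv_sub_never_exceeds[OF True] True by auto
    qed (use inv_sub_less_iff_rat[OF \<omega>] in auto)
  qed
  also have "\<dots> \<in> sets M"
    by measurable
  finally show "{\<omega> \<in> space M. inv_sub sg t \<omega> < y} \<in> sets M" .
qed

text \<open>Clamping the time at \<open>0\<close> makes the distribution function of \<open>\<sigma>(s)\<close> total and
  jointly measurable in \<open>(s, x)\<close>.\<close>

definition sg_cdf :: "real \<Rightarrow> real \<Rightarrow> ennreal" where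
  "sg_cdf s x = emeasure M {\<omega> \<in> space M. sg (max 0 s) \<omega> \<le> x}"

lemma sets_sg_le[measurable]: "0 \<le> s \<Longrightarrow> {\<omega> \<in> space M. sg s \<omega> \<le> x} \<in> sets M"
  using borel_measurable_sg[of s] by measurable

lemma sg_cdf_eq_nn_integral: "sg_cdf s x = (\<integral>\<^sup>+ \<omega>. of_bool (sg (max 0 s) \<omega> \<le> x) \<partial>M)"
proof -
  have "sg_cdf s x = (\<integral>\<^sup>+ \<omega>. indicator {\<omega> \<in> space M. sg (max 0 s) \<omega> \<le> x} \<omega> \<partial>M)"
    unfolding sg_cdf_def by (rule nn_integral_indicator[symmetric]) measurable
  also have "\<dots> = (\<integral>\<^sup>+ \<omega>. of_bool (sg (max 0 s) \<omega> \<le> x) \<partial>M)"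
    by (intro nn_integral_cong) (auto simp: indicator_def)
  finally show ?thesis .
qed

lemma measurable_sg_cdf[measurable]:
  assumes [measurable]: "a \<in> borel_measurable K" "c \<in> borel_measurable K"
  shows "(\<lambda>z. sg_cdf (a z) (c z)) \<in> borel_measurable K"
  unfolding sg_cdf_eq_nn_integral by measurable

lemma sg_cdf_neg:
  assumes "x < 0"
  shows "sg_cdf s x = 0"
proof -
  have empty: "{\<omega> \<in> space M. sg (max 0 s) \<omega> \<le> x} = {}"
    using sg_nonneg[of _ "max 0 s"] assms by force
  show ?thesis
    unfolding sg_cdf_def empty by simp
qed

text \<open>\<open>occupation_moment k t\<close> is the \<open>G k t\<close> of the proof sketch above.\<close>

definition occupation_moment :: "nat \<Rightarrow> real \<Rightarrow> ennreal" where
  "occupation_moment k t = (\<integral>\<^sup>+ s. ennreal (s ^ k / fact k) * indicator {0..} s * sg_cdf s t \<partial>lborel)"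

lemma measurable_occupation_moment[measurable]:
  assumes [measurable]: "c \<in> borel_measurable K"
  shows "(\<lambda>z. occupation_moment k (c z)) \<in> borel_measurable K"
  unfolding occupation_moment_def by measurable

lemma occupation_moment_neg: "x < 0 \<Longrightarrow> occupation_moment k x = 0"
  by (simp add: occupation_moment_def sg_cdf_neg)

lemma emeasure_never_exceeds_eq_0:
  assumes "occupation_moment 0 t < \<infinity>"
  shows "emeasure M (never_exceeds t) = 0"
proof -
  have bound: "of_nat n * emeasure M (never_exceeds t) \<le> occupation_moment 0 t" for n :: nat
  proof -
    have "of_nat n * emeasure M (never_exceeds t) = (\<integral>\<^sup>+ s. indicator {0..real n} s * emeasure M (never_exceeds t) \<partial>lborel)"
      by (simp add: nn_integral_multc ennreal_of_nat_eq_real_of_nat)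
    also have "\<dots> \<le> occupation_moment 0 t"
      unfolding occupation_moment_def
    proof (intro nn_integral_mono)
      fix s :: real
      have "0 \<le> s \<Longrightarrow> emeasure M (never_exceeds t) \<le> sg_cdf s t"
        unfolding sg_cdf_def by (intro emeasure_mono sets_sg_le) (auto simp: never_exceeds_def)
      then show "indicator {0..real n} s * emeasure M (never_exceeds t) \<le> ennreal (s ^ 0 / fact 0) * indicator {0..} s * sg_cdf s t"
        by (auto simp: indicator_def)
    qed
    finally show ?thesis .
  qed
  obtain g where g: "occupation_moment 0 t = ennreal g" "0 \<le> g"
    using assms by (cases "occupation_moment 0 t") auto
  have le: "real n * measure M (never_exceeds t) \<le> g" for n :: nat
  proof -
    have "ennreal (real n * measure M (never_exceeds t)) \<le> ennreal g"
      using bound[of n] by (simp add: g emeasure_eq_measure ennreal_of_nat_eq_real_of_nat ennreal_mult)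
    then show ?thesis
      by (subst (asm) ennreal_le_iff[OF g(2)])
  qed
  have "measure M (never_exceeds t) = 0"
  proof (rule ccontr)
    assume "measure M (never_exceeds t) \<noteq> 0"
    then have pos: "0 < measure M (never_exceeds t)"
      by (simp add: zero_less_measure_iff)
    obtain n :: nat where "g / measure M (never_exceeds t) < real n"
      using reals_Archimedean2 by blast
    then show False
      using le[of n] pos by (simp add: field_simps)
  qed
  then show ?thesis
    by (simp add: emeasure_eq_measure)
qed

lemma AE_inv_sub_nonneg:
  assumes "emeasure M (never_exceeds t) = 0"
  shows "AE \<omega> in M. 0 \<le> inv_sub sg t \<omega>"
proof -
  have "AE \<omega> in M. \<omega> \<notin> never_exceeds t"
    using assms by (intro AE_not_in) (auto simp: null_sets_def)
  with AE_space show ?thesis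
    by eventually_elim (auto intro: inv_sub_nonneg)
qed

lemma nn_integral_inv_sub_power:
  assumes "0 \<le> t" and null: "emeasure M (never_exceeds t) = 0"
  shows "(\<integral>\<^sup>+ \<omega>. ennreal (inv_sub sg t \<omega> ^ Suc k / fact (Suc k)) \<partial>M) = occupation_moment k t"
proof -
  let ?L = "inv_sub sg t"
  have good: "AE \<omega> in M. \<omega> \<notin> never_exceeds t"
    using null by (intro AE_not_in) (auto simp: null_sets_def)
  note nonneg = AE_inv_sub_nonneg[OF null]
  have lower: "emeasure M {\<omega> \<in> space M. 0 \<le> s \<and> s < ?L \<omega>} \<le> indicator {0..} s * sg_cdf s t" for s
  proof (cases "0 \<le> s")
    case True
    then show ?thesis
      unfolding sg_cdf_def using sg_le_of_less_inv_sub[OF _ _ \<open>0 \<le> t\<close>]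
      by (auto intro!: emeasure_mono sets_sg_le)
  qed simp
  have upper: "indicator {0..} s * sg_cdf s t \<le> emeasure M {\<omega> \<in> space M. 0 \<le> s \<and> s \<le> ?L \<omega>}" for s
  proof (cases "0 \<le> s")
    case True
    then show ?thesis
      unfolding sg_cdf_def using good le_inv_sub_of_sg_le
      by (auto intro!: emeasure_mono_AE sets_sg_le elim!: eventually_mono)
  qed simp
  show ?thesis
  proof (rule antisym)
    show "(\<integral>\<^sup>+ \<omega>. ennreal (?L \<omega> ^ Suc k / fact (Suc k)) \<partial>M) \<le> occupation_moment k t"
      unfolding nn_integral_power_div_fact_layers(1)[OF borel_measurable_inv_sub nonneg] occupation_moment_def
      by (intro nn_integral_mono) (simp add: mult.assoc lower mult_left_mono)
    show "occupation_moment k t \<le> (\<integral>\<^sup>+ \<omega>. ennreal (?L \<omega> ^ Suc k / fact (Suc k)) \<partial>M)"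
      unfolding nn_integral_power_div_fact_layers(2)[OF borel_measurable_inv_sub nonneg] occupation_moment_def
      by (intro nn_integral_mono) (simp add: mult.assoc upper mult_left_mono)
  qed
qed

lemma distr_sg_increment:
  assumes "0 \<le> a" "0 \<le> b"
  shows "distr M borel (sg a) \<Otimes>\<^sub>M distr M borel (sg b)
    = distr M (borel \<Otimes>\<^sub>M borel) (\<lambda>\<omega>. (sg a \<omega>, sg (a + b) \<omega> - sg a \<omega>))"
proof -
  define D where "D = (\<lambda>\<omega>. sg (a + b) \<omega> - sg a \<omega>)"
  have [measurable]: "sg a \<in> borel_measurable M" "sg (a + b) \<in> borel_measurable M"
    using assms by (auto intro: borel_measurable_sg)
  then have [measurable]: "D \<in> borel_measurable M"
    unfolding D_def by measurable
  define ts :: "nat \<Rightarrow> real" where "ts i = (if i = 0 then 0 else if i = 1 then a else a + b)" for i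
  have increments: "\<forall>n ts. 0 \<le> ts 0 \<and> (\<forall>i<n. ts i \<le> ts (Suc i)) \<longrightarrow>
      indep_vars (\<lambda>_. borel) (\<lambda>i \<omega>. sg (ts (Suc i)) \<omega> - sg (ts i) \<omega>) {..<n}"
    using subordinator by (simp add: subordinator_def)
  have "0 \<le> ts 0 \<and> (\<forall>i<2. ts i \<le> ts (Suc i))"
    using assms by (auto simp: ts_def numeral_2_eq_2 less_Suc_eq)
  moreover have two: "{..<2::nat} = insert 0 {1}"
    by auto
  ultimately have "indep_vars (\<lambda>_. borel) (\<lambda>i \<omega>. sg (ts (Suc i)) \<omega> - sg (ts i) \<omega>) (insert 0 {1})"
    unfolding two[symmetric] using increments by blast
  from indep_vars_sum[OF _ _ this]
  have "indep_var borel (\<lambda>\<omega>. sg a \<omega> - sg 0 \<omega>) borel D"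
    by (simp add: ts_def D_def)
  moreover have "distr M borel (\<lambda>\<omega>. sg a \<omega> - sg 0 \<omega>) = distr M borel (sg a)"
    and "distr M (borel \<Otimes>\<^sub>M borel) (\<lambda>\<omega>. (sg a \<omega> - sg 0 \<omega>, D \<omega>)) = distr M (borel \<Otimes>\<^sub>M borel) (\<lambda>\<omega>. (sg a \<omega>, D \<omega>))"
    by (auto intro!: distr_cong simp: sg_zero)
  ultimately have "distr M borel (sg a) \<Otimes>\<^sub>M distr M borel D = distr M (borel \<Otimes>\<^sub>M borel) (\<lambda>\<omega>. (sg a \<omega>, D \<omega>))"
    unfolding indep_var_distribution_eq by simp
  moreover have "distr M borel D = distr M borel (sg b)"
    using subordinator assms unfolding subordinator_def D_def by auto
  ultimately show ?thesis
    by (simp add: D_def)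
qed

lemma sg_cdf_add:
  assumes "0 \<le> a" "0 \<le> b"
  shows "sg_cdf (a + b) x = (\<integral>\<^sup>+ y. sg_cdf a (x - y) \<partial>distr M borel (sg b))"
proof -
  have [measurable]: "sg a \<in> borel_measurable M" "sg b \<in> borel_measurable M" "sg (a + b) \<in> borel_measurable M"
    using assms by (auto intro: borel_measurable_sg)
  interpret X: prob_space "distr M borel (sg a)"
    by (rule prob_space_distr) simp
  interpret Y: prob_space "distr M borel (sg b)"
    by (rule prob_space_distr) simp
  interpret XY: pair_sigma_finite "distr M borel (sg a)" "distr M borel (sg b)" ..
  have S: "{p :: real \<times> real. fst p + snd p \<le> x} \<in> sets (borel \<Otimes>\<^sub>M borel)"
  proof -
    have "{p :: real \<times> real. fst p + snd p \<le> x} = {p \<in> space (borel \<Otimes>\<^sub>M borel). fst p + snd p \<le> x}"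
      by (auto simp: space_pair_measure)
    also have "\<dots> \<in> sets (borel \<Otimes>\<^sub>M borel)"
      by measurable
    finally show ?thesis .
  qed
  have "sg_cdf (a + b) x
      = emeasure (distr M (borel \<Otimes>\<^sub>M borel) (\<lambda>\<omega>. (sg a \<omega>, sg (a + b) \<omega> - sg a \<omega>))) {p. fst p + snd p \<le> x}"
    using S assms by (subst emeasure_distr)
      (auto simp: sg_cdf_def space_pair_measure intro!: arg_cong[where f="emeasure M"])
  also have "\<dots> = (\<integral>\<^sup>+ y. emeasure (distr M borel (sg a)) ((\<lambda>p. (p, y)) -` {p. fst p + snd p \<le> x}) \<partial>distr M borel (sg b))"
    unfolding distr_sg_increment[OF assms, symmetric] using S by (intro XY.emeasure_pair_measure_alt2) simp
  also have "\<dots> = (\<integral>\<^sup>+ y. sg_cdf a (x - y) \<partial>distr M borel (sg b))"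
  proof (intro nn_integral_cong)
    fix y
    have "(\<lambda>p. (p, y)) -` {p. fst p + snd p \<le> x} = {..x - y}"
      by auto
    then show "emeasure (distr M borel (sg a)) ((\<lambda>p. (p, y)) -` {p. fst p + snd p \<le> x}) = sg_cdf a (x - y)"
      using assms by (subst emeasure_distr) (auto simp: sg_cdf_def intro!: arg_cong[where f="emeasure M"])
  qed
  finally show ?thesis .
qed

text \<open>The potential measure \<open>A \<mapsto> E \<integral>\<^sub>0\<^sup>\<infinity> 1\<^sub>A(\<sigma>(t)) dt\<close>, as the image of \<open>dt \<otimes> P\<close> on
  \<open>[0, \<infinity>) \<times> \<Omega>\<close> under \<open>(t, \<omega>) \<mapsto> \<sigma>(t, \<omega>)\<close>.\<close>

definition potential_measure :: "real measure" where
  "potential_measure = distr (density (lborel \<Otimes>\<^sub>M M) (\<lambda>p. indicator {0..} (fst p))) borel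
     (\<lambda>p. sg (max 0 (fst p)) (snd p))"

lemma sets_potential_measure[simp]: "sets potential_measure = sets borel"
  by (simp add: potential_measure_def)

lemma nn_integral_potential_measure:
  assumes [measurable]: "h \<in> borel_measurable borel"
  shows "(\<integral>\<^sup>+ z. h z \<partial>potential_measure) = (\<integral>\<^sup>+ b. indicator {0..} b * (\<integral>\<^sup>+ \<omega>. h (sg b \<omega>) \<partial>M) \<partial>lborel)"
proof -
  define SG where "SG = (\<lambda>p::real \<times> 'a. sg (max 0 (fst p)) (snd p))"
  define N where "N = density (lborel \<Otimes>\<^sub>M M) (\<lambda>p::real \<times> 'a. indicator {0::real..} (fst p))"
  have SG_product[measurable]: "SG \<in> borel_measurable (lborel \<Otimes>\<^sub>M M)"
    unfolding SG_def by measurable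
  then have [measurable]: "SG \<in> borel_measurable N"
    by (simp add: N_def)
  have "(\<integral>\<^sup>+ z. h z \<partial>potential_measure) = (\<integral>\<^sup>+ p. h (SG p) \<partial>N)"
    unfolding potential_measure_def SG_def[symmetric] N_def[symmetric] by (rule nn_integral_distr) measurable
  also have "\<dots> = (\<integral>\<^sup>+ p. indicator {0..} (fst p) * h (SG p) \<partial>(lborel \<Otimes>\<^sub>M M))"
    unfolding N_def by (rule nn_integral_density) measurable
  also have "\<dots> = (\<integral>\<^sup>+ b. (\<integral>\<^sup>+ \<omega>. indicator {0..} b * h (SG (b, \<omega>)) \<partial>M) \<partial>lborel)"
  proof -
    have "(\<lambda>p. indicator {0..} (fst p) * h (SG p)) \<in> borel_measurable (lborel \<Otimes>\<^sub>M M)"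
      by measurable
    from nn_integral_fst[OF this] show ?thesis
      by simp
  qed
  also have "\<dots> = (\<integral>\<^sup>+ b. indicator {0..} b * (\<integral>\<^sup>+ \<omega>. h (sg b \<omega>) \<partial>M) \<partial>lborel)"
  proof (intro nn_integral_cong)
    fix b :: real
    show "(\<integral>\<^sup>+ \<omega>. indicator {0..} b * h (SG (b, \<omega>)) \<partial>M) = indicator {0..} b * (\<integral>\<^sup>+ \<omega>. h (sg b \<omega>) \<partial>M)"
    proof (cases "0 \<le> b")
      case True
      then have [measurable]: "sg b \<in> borel_measurable M"
        by (rule borel_measurable_sg)
      show ?thesis
        using True by (subst nn_integral_cmult[symmetric]) (auto simp: SG_def)
    qed simp
  qed
  finally show ?thesis .
qed

end

section \<open>Moments of the inverse subordinator\<close>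

locale subordinator_potential = subordinator_process +
  fixes u :: "real \<Rightarrow> real"
  assumes potential: "potential_density M sg u"
    and u_nonneg: "\<And>x. 0 < x \<Longrightarrow> 0 \<le> u x"
    and u_antimono: "antimono_on {0<..} u"
    and u_integrable_near_0: "\<And>x. (\<integral>\<^sup>+ y. indicator {0<..x} y * ennreal (u y) \<partial>lborel) < \<infinity>"
begin

lemma indicator_times_ennreal_u: "indicator A y * ennreal (u y) = ennreal (indicator A y * u y)"
  by (simp add: indicator_def)

lemma borel_measurable_u[measurable]: "(\<lambda>y. indicator {0<..} y * u y) \<in> borel_measurable borel"
  using u_antimono by (rule borel_measurable_indicator_times_antimono)

lemma borel_measurable_u_Ioc[measurable]: "(\<lambda>y. indicator {0<..x} y * u y) \<in> borel_measurable borel"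
proof -
  have "(\<lambda>y. indicator {..x} y * (indicator {0<..} y * u y)) \<in> borel_measurable borel"
    by measurable
  moreover have "(\<lambda>y. indicator {..x} y * (indicator {0<..} y * u y)) = (\<lambda>y. indicator {0<..x} y * u y)"
    by (auto simp: indicator_def fun_eq_iff)
  ultimately show ?thesis
    by simp
qed

lemma borel_measurable_u_ennreal[measurable]:
  "(\<lambda>y. indicator {0<..} y * ennreal (u y)) \<in> borel_measurable borel"
  "(\<lambda>y. indicator {0<..x} y * ennreal (u y)) \<in> borel_measurable borel"
  unfolding indicator_times_ennreal_u
  by (rule measurable_compose[OF borel_measurable_u measurable_ennreal],
      rule measurable_compose[OF borel_measurable_u_Ioc measurable_ennreal])

lemma potential_measure_eq_density:
  "potential_measure = density lborel (\<lambda>y. indicator {0<..} y * ennreal (u y))"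
proof (rule measure_eqI)
  fix A assume "A \<in> sets potential_measure"
  then have [measurable]: "A \<in> sets borel"
    by simp
  have "emeasure potential_measure A = (\<integral>\<^sup>+ z. indicator A z \<partial>potential_measure)"
    by simp
  also have "\<dots> = (\<integral>\<^sup>+ b. indicator {0..} b * (\<integral>\<^sup>+ \<omega>. indicator A (sg b \<omega>) \<partial>M) \<partial>lborel)"
    by (rule nn_integral_potential_measure) measurable
  also have "\<dots> = (\<integral>\<^sup>+ b. indicator {0..} b * emeasure M {\<omega> \<in> space M. sg b \<omega> \<in> A} \<partial>lborel)"
  proof (intro nn_integral_cong mult_indicator_atLeast_0_cong)
    fix b :: real
    assume "0 \<le> b"
    then have sets: "sg b -` A \<inter> space M \<in> sets M"
      by (intro measurable_sets[OF borel_measurable_sg]) simp_all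
    have "(\<integral>\<^sup>+ \<omega>. indicator A (sg b \<omega>) \<partial>M) = (\<integral>\<^sup>+ \<omega>. indicator (sg b -` A \<inter> space M) \<omega> \<partial>M)"
      by (intro nn_integral_cong) (auto simp: indicator_def)
    also have "\<dots> = emeasure M (sg b -` A \<inter> space M)"
      using sets by (rule nn_integral_indicator)
    also have "sg b -` A \<inter> space M = {\<omega> \<in> space M. sg b \<omega> \<in> A}"
      by auto
    finally show "(\<integral>\<^sup>+ \<omega>. indicator A (sg b \<omega>) \<partial>M) = emeasure M {\<omega> \<in> space M. sg b \<omega> \<in> A}" .
  qed
  also have "\<dots> = (\<integral>\<^sup>+ x. indicator (A \<inter> {0<..}) x * ennreal (u x) \<partial>lborel)"
    by (rule potential[unfolded potential_density_def, rule_format]) simp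
  also have "\<dots> = (\<integral>\<^sup>+ y. indicator {0<..} y * ennreal (u y) * indicator A y \<partial>lborel)"
    by (intro nn_integral_cong) (auto simp: indicator_def)
  also have "\<dots> = emeasure (density lborel (\<lambda>y. indicator {0<..} y * ennreal (u y))) A"
    by (rule emeasure_density[symmetric]; measurable)
  finally show "emeasure potential_measure A = emeasure (density lborel (\<lambda>y. indicator {0<..} y * ennreal (u y))) A" .
qed simp

lemma nn_integral_potential:
  assumes [measurable]: "g \<in> borel_measurable borel"
  shows "(\<integral>\<^sup>+ b. indicator {0..} b * (\<integral>\<^sup>+ \<omega>. g (sg b \<omega>) \<partial>M) \<partial>lborel)
       = (\<integral>\<^sup>+ y. indicator {0<..} y * ennreal (u y) * g y \<partial>lborel)"
proof -
  have "(\<integral>\<^sup>+ b. indicator {0..} b * (\<integral>\<^sup>+ \<omega>. g (sg b \<omega>) \<partial>M) \<partial>lborel) = (\<integral>\<^sup>+ y. g y \<partial>potential_measure)"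
    by (rule nn_integral_potential_measure[symmetric]) measurable
  also have "\<dots> = (\<integral>\<^sup>+ y. indicator {0<..} y * ennreal (u y) * g y \<partial>lborel)"
    unfolding potential_measure_eq_density by (rule nn_integral_density) measurable
  finally show ?thesis .
qed

definition truncated_laplace :: "real \<Rightarrow> real \<Rightarrow> ennreal" where
  "truncated_laplace \<theta> x = (\<integral>\<^sup>+ y. indicator {0<..x} y * ennreal (u y) * ennreal (exp (- \<theta> * y)) \<partial>lborel)"

lemma truncated_laplace_INF: "(INF n::nat. truncated_laplace (real n) x) = 0"
  unfolding truncated_laplace_def indicator_times_ennreal_u
proof (rule nn_integral_exp_decay_INF)
  show "(\<lambda>y. indicator {0<..x} y * u y) \<in> borel_measurable borel"
    by measurable
  show "0 \<le> indicator {0<..x} y * u y" for y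
    using u_nonneg[of y] by (simp add: indicator_def)
  show "indicator {0<..x} y * u y = 0" if "y \<le> 0" for y
    using that by simp
  show "(\<integral>\<^sup>+ y. ennreal (indicator {0<..x} y * u y) \<partial>lborel) < \<infinity>"
    using u_integrable_near_0[of x, unfolded indicator_times_ennreal_u] .
qed

lemma occupation_moment_0: "occupation_moment 0 x = (\<integral>\<^sup>+ y. indicator {0<..x} y * ennreal (u y) \<partial>lborel)"
proof -
  have "occupation_moment 0 x = (\<integral>\<^sup>+ s. indicator {0..} s * emeasure M {\<omega> \<in> space M. sg s \<omega> \<in> {..x}} \<partial>lborel)"
    unfolding occupation_moment_def sg_cdf_def by (intro nn_integral_cong) (auto simp: indicator_def)
  also have "\<dots> = (\<integral>\<^sup>+ y. indicator ({..x} \<inter> {0<..}) y * ennreal (u y) \<partial>lborel)"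
    using potential[unfolded potential_density_def, rule_format, of "{..x}"] by simp
  also have "\<dots> = (\<integral>\<^sup>+ y. indicator {0<..x} y * ennreal (u y) \<partial>lborel)"
    by (intro nn_integral_cong) (auto simp: indicator_def)
  finally show ?thesis .
qed

lemma nn_integral_sg_cdf_shift:
  assumes "0 \<le> b"
  shows "(\<integral>\<^sup>+ a. ennreal (a ^ k / fact k) * indicator {0..} a * sg_cdf (a + b) x \<partial>lborel)
           = (\<integral>\<^sup>+ \<omega>. occupation_moment k (x - sg b \<omega>) \<partial>M)"
proof -
  have [measurable]: "sg b \<in> borel_measurable M"
    using assms by (rule borel_measurable_sg)
  interpret Y: prob_space "distr M borel (sg b)"
    by (rule prob_space_distr) simp
  interpret PY: pair_sigma_finite lborel "distr M borel (sg b)" ..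
  let ?w = "\<lambda>a::real. ennreal (a ^ k / fact k) * indicator {0..} a"
  have "(\<integral>\<^sup>+ a. ?w a * sg_cdf (a + b) x \<partial>lborel)
      = (\<integral>\<^sup>+ a. ?w a * (\<integral>\<^sup>+ y. sg_cdf a (x - y) \<partial>distr M borel (sg b)) \<partial>lborel)"
    using assms by (intro nn_integral_cong) (auto simp: sg_cdf_add indicator_def)
  also have "\<dots> = (\<integral>\<^sup>+ a. (\<integral>\<^sup>+ y. ?w a * sg_cdf a (x - y) \<partial>distr M borel (sg b)) \<partial>lborel)"
    by (intro nn_integral_cong nn_integral_cmult[symmetric]) measurable
  also have "\<dots> = (\<integral>\<^sup>+ y. (\<integral>\<^sup>+ a. ?w a * sg_cdf a (x - y) \<partial>lborel) \<partial>distr M borel (sg b))"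
    by (rule PY.Fubini'[symmetric]) measurable
  also have "\<dots> = (\<integral>\<^sup>+ \<omega>. occupation_moment k (x - sg b \<omega>) \<partial>M)"
    unfolding occupation_moment_def[symmetric] by (rule nn_integral_distr) measurable
  finally show ?thesis .
qed

lemma occupation_moment_Suc:
  "occupation_moment (Suc k) x = (\<integral>\<^sup>+ y. indicator {0<..} y * ennreal (u y) * occupation_moment k (x - y) \<partial>lborel)"
proof -
  have "occupation_moment (Suc k) x = (\<integral>\<^sup>+ b. indicator {0..} b *
      (\<integral>\<^sup>+ a. ennreal (a ^ k / fact k) * indicator {0..} a * sg_cdf (a + b) x \<partial>lborel) \<partial>lborel)"
    unfolding occupation_moment_def by (rule nn_integral_power_div_fact_Suc_convolution) measurable
  also have "\<dots> = (\<integral>\<^sup>+ b. indicator {0..} b * (\<integral>\<^sup>+ \<omega>. occupation_moment k (x - sg b \<omega>) \<partial>M) \<partial>lborel)"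
    by (intro nn_integral_cong mult_indicator_atLeast_0_cong nn_integral_sg_cdf_shift)
  also have "\<dots> = (\<integral>\<^sup>+ y. indicator {0<..} y * ennreal (u y) * occupation_moment k (x - y) \<partial>lborel)"
    by (rule nn_integral_potential) measurable
  finally show ?thesis .
qed

lemma occupation_moment_0_le_exp:
  assumes "0 \<le> \<theta>" and "z \<le> x"
  shows "occupation_moment 0 z \<le> ennreal (exp (\<theta> * z)) * truncated_laplace \<theta> x"
proof -
  have "occupation_moment 0 z
      \<le> (\<integral>\<^sup>+ y. ennreal (exp (\<theta> * z)) * (indicator {0<..x} y * ennreal (u y) * ennreal (exp (- \<theta> * y))) \<partial>lborel)"
    unfolding occupation_moment_0
  proof (intro nn_integral_mono)
    fix y :: real
    show "indicator {0<..z} y * ennreal (u y)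
        \<le> ennreal (exp (\<theta> * z)) * (indicator {0<..x} y * ennreal (u y) * ennreal (exp (- \<theta> * y)))"
    proof (cases "0 < y \<and> y \<le> z")
      case True
      have "1 \<le> exp (\<theta> * (z - y))"
        using assms(1) True by simp
      also have "\<dots> = exp (\<theta> * z) * exp (- \<theta> * y)"
        by (simp add: exp_add[symmetric] algebra_simps)
      finally have "ennreal (u y * 1) \<le> ennreal (u y * (exp (\<theta> * z) * exp (- \<theta> * y)))"
        using u_nonneg[of y] True by (intro ennreal_leI mult_left_mono) auto
      also have "\<dots> = ennreal (exp (\<theta> * z)) * (ennreal (u y) * ennreal (exp (- \<theta> * y)))"
        using u_nonneg[of y] True
        by (simp only: ennreal_mult[symmetric] exp_ge_zero mult_nonneg_nonneg ac_simps)
      finally show ?thesis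
        using True assms(2) by (simp add: indicator_def)
    qed (auto simp: indicator_def)
  qed
  also have "\<dots> = ennreal (exp (\<theta> * z)) * truncated_laplace \<theta> x"
    unfolding truncated_laplace_def by (rule nn_integral_cmult) measurable
  finally show ?thesis .
qed

lemma occupation_moment_le_exp:
  assumes "0 \<le> \<theta>" and "z \<le> x"
  shows "occupation_moment k z \<le> ennreal (exp (\<theta> * z)) * truncated_laplace \<theta> x ^ Suc k"
  using assms(2)
proof (induction k arbitrary: z)
  case 0
  then show ?case
    unfolding power_Suc0_right by (rule occupation_moment_0_le_exp[OF assms(1)])
next
  case (Suc k)
  let ?Q = "truncated_laplace \<theta> x"
  have "occupation_moment (Suc k) z
      \<le> (\<integral>\<^sup>+ y. (indicator {0<..x} y * ennreal (u y) * ennreal (exp (- \<theta> * y))) * (ennreal (exp (\<theta> * z)) * ?Q ^ Suc k) \<partial>lborel)"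
    unfolding occupation_moment_Suc
  proof (intro nn_integral_mono)
    fix y :: real
    show "indicator {0<..} y * ennreal (u y) * occupation_moment k (z - y)
        \<le> (indicator {0<..x} y * ennreal (u y) * ennreal (exp (- \<theta> * y))) * (ennreal (exp (\<theta> * z)) * ?Q ^ Suc k)"
    proof (cases "0 < y \<and> y \<le> z")
      case True
      have "occupation_moment k (z - y) \<le> ennreal (exp (\<theta> * (z - y))) * ?Q ^ Suc k"
        using Suc True by auto
      also have "ennreal (exp (\<theta> * (z - y))) = ennreal (exp (- \<theta> * y)) * ennreal (exp (\<theta> * z))"
        by (simp add: ennreal_mult[symmetric] exp_add[symmetric] algebra_simps)
      finally have "ennreal (u y) * occupation_moment k (z - y)
          \<le> ennreal (u y) * (ennreal (exp (- \<theta> * y)) * ennreal (exp (\<theta> * z)) * ?Q ^ Suc k)"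
        by (rule mult_left_mono) simp
      moreover have "indicator {0<..} y = (1 :: ennreal)" "indicator {0<..x} y = (1 :: ennreal)"
        using True Suc.prems by (simp_all add: indicator_def)
      ultimately show ?thesis
        by (simp only: mult_1_left mult.assoc)
    next
      case False
      then have "indicator {0<..} y = (0 :: ennreal) \<or> occupation_moment k (z - y) = 0"
        using occupation_moment_neg[of "z - y" k] by (cases "0 < y") simp_all
      then show ?thesis
        by (elim disjE) (simp_all only: mult_zero_left mult_zero_right zero_le)
    qed
  qed
  also have "\<dots> = ?Q * (ennreal (exp (\<theta> * z)) * ?Q ^ Suc k)"
    unfolding truncated_laplace_def by (rule nn_integral_multc) measurable
  also have "\<dots> = ennreal (exp (\<theta> * z)) * ?Q ^ Suc (Suc k)"
    by (simp only: power_Suc[of ?Q "Suc k"] mult.left_commute)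
  finally show ?case .
qed

lemma occupation_moment_less_top: "occupation_moment k x < \<infinity>"
proof -
  have "occupation_moment k x \<le> ennreal (exp (0 * x)) * truncated_laplace 0 x ^ Suc k"
    by (rule occupation_moment_le_exp) auto
  also have "\<dots> < \<infinity>"
    using u_integrable_near_0[of x]
    by (simp add: truncated_laplace_def power_less_top_ennreal del: power_Suc)
  finally show ?thesis .
qed

lemma emeasure_never_exceeds: "emeasure M (never_exceeds t) = 0"
  by (rule emeasure_never_exceeds_eq_0[OF occupation_moment_less_top])

lemma occupation_moment_0_eq_Upot: "occupation_moment 0 x = ennreal (Upot u x) \<and> 0 \<le> Upot u x"
proof -
  define f where "f = (\<lambda>s. indicator {0..x} s *\<^sub>R u s)"
  have f_meas: "f \<in> borel_measurable lborel"
  proof (rule measurable_discrete_difference[where X = "{0}"])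
    show "(\<lambda>s. indicator {..x} s * (indicator {0<..} s * u s)) \<in> borel_measurable lborel"
      by measurable
  qed (auto simp: f_def indicator_def)
  have not_0: "AE y in lborel. y \<noteq> 0"
    by (rule AE_lborel_singleton)
  have "0 \<le> f y" if "y \<noteq> 0" for y
    using that u_nonneg[of y] by (cases "y \<in> {0..x}") (simp_all add: f_def)
  with not_0 have f_nonneg: "AE y in lborel. 0 \<le> f y"
    by (auto elim!: eventually_mono)
  have eq: "occupation_moment 0 x = (\<integral>\<^sup>+ y. ennreal (f y) \<partial>lborel)"
    unfolding occupation_moment_0 using not_0
    by (intro nn_integral_cong_AE) (auto simp: f_def indicator_def elim!: eventually_mono)
  then have "(\<integral>\<^sup>+ y. ennreal (f y) \<partial>lborel) < \<infinity>"
    using occupation_moment_less_top by metis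
  from nn_integral_eq_ennreal_integral[OF f_meas f_nonneg this] show ?thesis
    using eq by (simp add: f_def Upot_def set_lebesgue_integral_def)
qed

lemma occupation_moment_Suc_eq_convolution:
  assumes IH: "\<And>s. occupation_moment k s = ennreal (v s)" "\<And>s. 0 \<le> v s"
  shows "occupation_moment (Suc k) x = ennreal (LINT s:{0..x}|lborel. u (x - s) * v s)
    \<and> 0 \<le> (LINT s:{0..x}|lborel. u (x - s) * v s)"
proof -
  have [measurable]: "v \<in> borel_measurable borel"
  proof -
    have "v = (\<lambda>s. enn2real (occupation_moment k s))"
      using IH by (auto simp: fun_eq_iff)
    then show ?thesis
      by simp
  qed
  have v_neg: "v s = 0" if "s < 0" for s
    using IH[of s] occupation_moment_neg[OF that, of k] by simp
  define f where "f = (\<lambda>s. indicator {0..x} s *\<^sub>R (u (x - s) * v s))"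
  have f_meas: "f \<in> borel_measurable lborel"
  proof (rule measurable_discrete_difference[where X = "{x}"])
    show "(\<lambda>s. indicator {..<x} s * ((indicator {0<..} (x - s) * u (x - s)) * v s) * indicator {0..} s)
        \<in> borel_measurable lborel"
      by measurable
  qed (auto simp: f_def indicator_def)
  have not_x: "AE y in lborel. y \<noteq> x"
    by (rule AE_lborel_singleton)
  have "0 \<le> f y" if "y \<noteq> x" for y
    using that u_nonneg[of "x - y"] IH(2)[of y] by (cases "y \<in> {0..x}") (simp_all add: f_def)
  with not_x have f_nonneg: "AE y in lborel. 0 \<le> f y"
    by (auto elim!: eventually_mono)
  have "occupation_moment (Suc k) x = (\<integral>\<^sup>+ y. indicator {0<..} y * ennreal (u y) * ennreal (v (x - y)) \<partial>lborel)"
    by (simp only: occupation_moment_Suc IH(1))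
  also have "\<dots> = (\<integral>\<^sup>+ s. indicator {0<..} (x - s) * ennreal (u (x - s)) * ennreal (v s) \<partial>lborel)"
    by (rule nn_integral_convolution_commute[of "\<lambda>y. indicator {0<..} y * ennreal (u y)" "\<lambda>s. ennreal (v s)"])
      measurable
  also have "\<dots> = (\<integral>\<^sup>+ s. ennreal (f s) \<partial>lborel)"
    using not_x
  proof (intro nn_integral_cong_AE, eventually_elim)
    case (elim s)
    show ?case
      using elim u_nonneg[of "x - s"] IH(2)[of s] v_neg[of s]
      by (cases "s < x"; cases "0 \<le> s") (simp_all add: f_def indicator_def ennreal_mult)
  qed
  finally have eq: "occupation_moment (Suc k) x = (\<integral>\<^sup>+ s. ennreal (f s) \<partial>lborel)" .
  then have "(\<integral>\<^sup>+ y. ennreal (f y) \<partial>lborel) < \<infinity>"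
    using occupation_moment_less_top by metis
  from nn_integral_eq_ennreal_integral[OF f_meas f_nonneg this] show ?thesis
    using eq by (simp add: f_def set_lebesgue_integral_def)
qed

lemma occupation_moment_eq_ustar:
  "occupation_moment k x = ennreal (ustar u (Suc k) x) \<and> 0 \<le> ustar u (Suc k) x"
proof (induction k arbitrary: x)
  case 0
  then show ?case
    using occupation_moment_0_eq_Upot by simp
next
  case (Suc k)
  then have "occupation_moment k s = ennreal (ustar u (Suc k) s)" "0 \<le> ustar u (Suc k) s" for s
    by auto
  from occupation_moment_Suc_eq_convolution[OF this] show ?case
    by simp
qed

lemma ustar_nonneg: "0 \<le> ustar u k t"
  using occupation_moment_eq_ustar by (cases k) auto

lemma inv_sub_moment:
  assumes "0 \<le> t"
  shows "integrable M (\<lambda>\<omega>. inv_sub sg t \<omega> ^ k / fact k) \<and>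
    expectation (\<lambda>\<omega>. inv_sub sg t \<omega> ^ k / fact k) = ustar u k t"
proof -
  have "(\<integral>\<^sup>+ \<omega>. ennreal (inv_sub sg t \<omega> ^ k / fact k) \<partial>M) = ennreal (ustar u k t)"
  proof (cases k)
    case (Suc j)
    then show ?thesis
      using nn_integral_inv_sub_power[OF assms emeasure_never_exceeds, of j] occupation_moment_eq_ustar[of j t]
      by simp
  qed (simp add: emeasure_space_1)
  moreover have "AE \<omega> in M. 0 \<le> inv_sub sg t \<omega> ^ k / fact k"
    using AE_inv_sub_nonneg[OF emeasure_never_exceeds[of t]] by eventually_elim simp
  ultimately show ?thesis
    using nn_integral_eq_integrable[of "\<lambda>\<omega>. inv_sub sg t \<omega> ^ k / fact k" M "ustar u k t"] ustar_nonneg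
    by simp
qed

lemma ustar_Suc_le_exp:
  assumes "0 \<le> \<theta>" "0 \<le> \<epsilon>" and "truncated_laplace \<theta> t \<le> ennreal \<epsilon>"
  shows "ustar u (Suc j) t \<le> exp (\<theta> * t) * \<epsilon> ^ Suc j"
proof -
  have "ennreal (ustar u (Suc j) t) = occupation_moment j t"
    using occupation_moment_eq_ustar by simp
  also have "\<dots> \<le> ennreal (exp (\<theta> * t)) * truncated_laplace \<theta> t ^ Suc j"
    using assms(1) by (rule occupation_moment_le_exp) simp
  also have "\<dots> \<le> ennreal (exp (\<theta> * t)) * ennreal \<epsilon> ^ Suc j"
    using assms(3) by (intro mult_left_mono power_mono) auto
  also have "\<dots> = ennreal (exp (\<theta> * t) * \<epsilon> ^ Suc j)"
    using assms(2) by (simp add: ennreal_mult ennreal_power)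
  finally show ?thesis
    using assms(2) by (subst (asm) ennreal_le_iff) auto
qed

lemma summable_ustar:
  assumes "0 \<le> c"
  shows "summable (\<lambda>k. c ^ k * ustar u k t)"
proof -
  define \<epsilon> where "\<epsilon> = 1 / (2 * (c + 1))"
  have "0 < \<epsilon>" and c_\<epsilon>: "c * \<epsilon> \<le> 1 / 2"
    using assms by (auto simp: \<epsilon>_def field_simps)
  then have "(INF n::nat. truncated_laplace (real n) t) < ennreal \<epsilon>"
    by (simp add: truncated_laplace_INF)
  then obtain n :: nat where "truncated_laplace (real n) t < ennreal \<epsilon>"
    unfolding INF_less_iff by blast
  then have bound: "ustar u (Suc j) t \<le> exp (real n * t) * \<epsilon> ^ Suc j" for j
    using \<open>0 < \<epsilon>\<close> by (intro ustar_Suc_le_exp) auto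
  show ?thesis
  proof (rule summable_comparison_test')
    show "summable (\<lambda>k. exp (real n * t) * (1 / 2) ^ k)"
      by (intro summable_mult summable_geometric) simp
    fix k :: nat
    assume "1 \<le> k"
    then obtain j where k: "k = Suc j"
      by (cases k) auto
    have "norm (c ^ k * ustar u k t) = c ^ k * ustar u k t"
      using assms ustar_nonneg by simp
    also have "\<dots> \<le> c ^ k * (exp (real n * t) * \<epsilon> ^ k)"
      using bound[of j] k assms by (intro mult_left_mono) auto
    also have "\<dots> = exp (real n * t) * (c * \<epsilon>) ^ k"
      by (simp add: power_mult_distrib ac_simps)
    also have "\<dots> \<le> exp (real n * t) * (1 / 2) ^ k"
      using c_\<epsilon> \<open>0 < \<epsilon>\<close> assms by (intro mult_left_mono power_mono) auto
    finally show "norm (c ^ k * ustar u k t) \<le> exp (real n * t) * (1 / 2) ^ k" .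
  qed
qed

end

theorem mainTheorem11:
  fixes M :: "'a measure" and sg :: "real \<Rightarrow> 'a \<Rightarrow> real"
    and Phi u :: "real \<Rightarrow> real" and nu :: "real measure"
    and C t0 beta l t :: real
  assumes "special_bernstein Phi"
    and "LK_triple_zero Phi nu" and "emeasure nu {0<..} = \<infinity>"
    and "subordinator M sg Phi"
    and "potential_density M sg u"
    and "\<forall>x>0. 0 \<le> u x"
    and "\<forall>x y. 0 < x \<longrightarrow> x \<le> y \<longrightarrow> u y \<le> u x"
    and "0 < t0" and "0 < C" and "0 < beta" and "beta < 1"
    and "\<forall>s. 0 < s \<longrightarrow> s < t0 \<longrightarrow> u s \<le> C * s powr (beta - 1)"
    and "0 \<le> t"
  shows "integrable M (\<lambda>\<omega>. exp (l * inv_sub sg t \<omega>)) \<and>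
         (\<lambda>k. l ^ k * ustar u k t) sums
           prob_space.expectation M (\<lambda>\<omega>. exp (l * inv_sub sg t \<omega>))"
proof -
  have antimono: "antimono_on {0<..} u"
    using assms(7) by (auto simp: monotone_on_def)
  have integrable_near_0: "(\<integral>\<^sup>+ y. indicator {0<..x} y * ennreal (u y) \<partial>lborel) < \<infinity>" for x
    using assms(12)
    by (intro nn_integral_Ioc_less_top_of_powr_bound[OF antimono assms(8) less_imp_le[OF assms(9)] assms(10)]) auto
  interpret subordinator_potential M sg Phi u
    by unfold_locales (use assms(4-6) antimono integrable_near_0 in auto)
  show ?thesis
    by (rule exp_moment_series[OF borel_measurable_inv_sub AE_inv_sub_nonneg[OF emeasure_never_exceeds[of t]]
        inv_sub_moment[OF assms(13)] summable_ustar]) simp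
qed

end
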